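(* Let $E^*$ be an $s$-$t$ path maximizing $\Lambda(\cdot,P)$ over all directed $s$-$t$ paths, with $d$ edges, and let $b=\max_i|E_2\cap p_i|$. If the initial recursion depth satisfies $I\ge\lceil\log d\rceil$, then the Extended Recursive Greedy algorithm returns an $s$-$t$ path $E_{\mathbf{f}}$ with $\Lambda(E_{\mathbf{f}},P)\ge\frac{1}{(b+1)(\lceil\log d\rceil+1)}\Lambda(E^*,P)$. (Logarithms are base 2.)
   Context: $G=(V,E)$ is a simple directed acyclic graph with capacities $C\in\mathbb{R}_{\ge0}^E$, $s,t\in V$ joined by a directed path, budget $0<\gamma\le\min_eC(e)$. User paths $P=\{p_1,\dots,p_k\}$ are directed paths (edge sets, not necessarily disjoint) with initial values $\lambda_i\ge0$, $\sum_{i:e\in p_i}\lambda_i\le C(e)$. For $A\subseteq E$ let $\tilde C_A(e)=C(e)-\gamma\mathbf{1}_{\{e\in A\}}$; $T(A,P)$ is the optimal value of: maximize $\sum_i\tilde\lambda_i$ s.t. $\sum_{i:e\in p_i}\tilde\lambda_i\le\tilde C_A(e)$ for all $e$, $0\le\tilde\lambda_i\le\lambda_i$; $\Lambda(A,P)=\sum_i\lambda_i-T(A,P)$. $E_1$ (resp. $E_2$) is the set of edges on exactly one (resp. at least two) user paths. $\tilde\lambda^{(1)}_{iA}=\min(\lambda_i,\min_{e\in p_i\cap E_1}\tilde C_A(e))$, $\tilde\lambda^{(2)}_{iA}=\tilde\lambda^{(1)}_{iA}\prod_{e\in p_i\cap E_2,\ \tilde C_A(e)\le\sum_{j:e\in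 p_j}\lambda_j}\frac{\tilde C_A(e)}{\sum_{j:e\in p_j}\lambda_j}$, $\bar\Lambda(A,P)=\sum_i\lambda_i-\sum_i\tilde\lambda^{(2)}_{iA}$. Recursive Greedy algorithm for a set function $F$ on $2^E$, with $F_X(A)=F(A\cup X)-F(X)$: $RG(u_1,u_2,X,i)$ lets $S$ be a shortest (fewest edges) $u_1$-$u_2$ path, returns "infeasible" if none exists, returns $S$ if $i=0$, and otherwise sets $best:=S$, $r:=F_X(S)$ and for every $v\in V$ computes $Q_1=RG(u_1,v,X,i-1)$, then $Q_2=RG(v,u_2,X\cup Q_1,i-1)$ (skipping $v$ if infeasible), updating $best:=Q_1\cup Q_2$, $r:=F_X(Q_1\cup Q_2)$ whenever $F_X(Q_1\cup Q_2)>r$; it returns $best$. The output is $RG(s,t,\emptyset,I)$. The Extended Recursive Greedy algorithm is this algorithm run with $F=\bar\Lambda(\cdot,P)$. *)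

theory Defs
  imports Complex_Main
begin

type_synonym 'v edge = "'v \<times> 'v"

definition is_vpath :: "'v edge set \<Rightarrow> 'v list \<Rightarrow> bool" where
  "is_vpath E xs \<longleftrightarrow> xs \<noteq> [] \<and> distinct xs \<and> (\<forall>e \<in> set (zip xs (tl xs)). e \<in> E)"

definition path_edges :: "'v list \<Rightarrow> 'v edge set" where
  "path_edges xs = set (zip xs (tl xs))"

definition st_path :: "'v edge set \<Rightarrow> 'v \<Rightarrow> 'v \<Rightarrow> 'v edge set \<Rightarrow> bool" where
  "st_path E u v S \<longleftrightarrow> (\<exists>xs. is_vpath E xs \<and> hd xs = u \<and> last xs = v \<and> S = path_edges xs)"

definition is_dpath :: "'v edge set \<Rightarrow> 'v edge set \<Rightarrow> bool" where
  "is_dpath E S \<longleftrightarrow> (\<exists>u v. st_path E u v S)"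

text \<open>A shortest-path oracle: returns some fewest-edge u-v path, or None if none exists.
  Ties are broken arbitrarily; the theorem quantifies over all such oracles.\<close>
definition valid_sp :: "'v edge set \<Rightarrow> ('v \<Rightarrow> 'v \<Rightarrow> 'v edge set option) \<Rightarrow> bool" where
  "valid_sp E sp \<longleftrightarrow> (\<forall>u v.
     (sp u v = None \<longleftrightarrow> \<not> (\<exists>S. st_path E u v S)) \<and>
     (\<forall>S. sp u v = Some S \<longrightarrow> st_path E u v S \<and> (\<forall>S'. st_path E u v S' \<longrightarrow> card S \<le> card S')))"

definition Ct :: "('v edge \<Rightarrow> real) \<Rightarrow> real \<Rightarrow> 'v edge set \<Rightarrow> 'v edge \<Rightarrow> real" where
  "Ct C \<gamma> A e = C e - (if e \<in> A then \<gamma> else 0)"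

definition users :: "(nat \<Rightarrow> 'v edge set) \<Rightarrow> nat \<Rightarrow> 'v edge \<Rightarrow> nat set" where
  "users p k e = {i. i < k \<and> e \<in> p i}"

definition load :: "(nat \<Rightarrow> 'v edge set) \<Rightarrow> (nat \<Rightarrow> real) \<Rightarrow> nat \<Rightarrow> 'v edge \<Rightarrow> real" where
  "load p lam k e = (\<Sum>j \<in> users p k e. lam j)"

definition T_opt :: "'v edge set \<Rightarrow> ('v edge \<Rightarrow> real) \<Rightarrow> real \<Rightarrow> (nat \<Rightarrow> 'v edge set)
    \<Rightarrow> (nat \<Rightarrow> real) \<Rightarrow> nat \<Rightarrow> 'v edge set \<Rightarrow> real" where
  "T_opt E C \<gamma> p lam k A = Sup {(\<Sum>i<k. l i) | l.
      (\<forall>i<k. 0 \<le> l i \<and> l i \<le> lam i) \<and>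
      (\<forall>e \<in> E. (\<Sum>i \<in> users p k e. l i) \<le> Ct C \<gamma> A e)}"

definition Lam :: "'v edge set \<Rightarrow> ('v edge \<Rightarrow> real) \<Rightarrow> real \<Rightarrow> (nat \<Rightarrow> 'v edge set)
    \<Rightarrow> (nat \<Rightarrow> real) \<Rightarrow> nat \<Rightarrow> 'v edge set \<Rightarrow> real" where
  "Lam E C \<gamma> p lam k A = (\<Sum>i<k. lam i) - T_opt E C \<gamma> p lam k A"

definition E1 :: "'v edge set \<Rightarrow> (nat \<Rightarrow> 'v edge set) \<Rightarrow> nat \<Rightarrow> 'v edge set" where
  "E1 E p k = {e \<in> E. card (users p k e) = 1}"

definition E2 :: "'v edge set \<Rightarrow> (nat \<Rightarrow> 'v edge set) \<Rightarrow> nat \<Rightarrow> 'v edge set" where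
  "E2 E p k = {e \<in> E. card (users p k e) \<ge> 2}"

text \<open>min over the empty set is +infinity, hence the case distinction.\<close>
definition lam1 :: "'v edge set \<Rightarrow> ('v edge \<Rightarrow> real) \<Rightarrow> real \<Rightarrow> (nat \<Rightarrow> 'v edge set)
    \<Rightarrow> (nat \<Rightarrow> real) \<Rightarrow> nat \<Rightarrow> nat \<Rightarrow> 'v edge set \<Rightarrow> real" where
  "lam1 E C \<gamma> p lam k i A =
     (if p i \<inter> E1 E p k = {} then lam i
      else min (lam i) (Min (Ct C \<gamma> A ` (p i \<inter> E1 E p k))))"

definition lam2 :: "'v edge set \<Rightarrow> ('v edge \<Rightarrow> real) \<Rightarrow> real \<Rightarrow> (nat \<Rightarrow> 'v edge set)
    \<Rightarrow> (nat \<Rightarrow> real) \<Rightarrow> nat \<Rightarrow> nat \<Rightarrow> 'v edge set \<Rightarrow> real" where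
  "lam2 E C \<gamma> p lam k i A =
     lam1 E C \<gamma> p lam k i A *
     (\<Prod>e \<in> {e \<in> p i \<inter> E2 E p k. Ct C \<gamma> A e \<le> load p lam k e}.
        Ct C \<gamma> A e / load p lam k e)"

definition Lbar :: "'v edge set \<Rightarrow> ('v edge \<Rightarrow> real) \<Rightarrow> real \<Rightarrow> (nat \<Rightarrow> 'v edge set)
    \<Rightarrow> (nat \<Rightarrow> real) \<Rightarrow> nat \<Rightarrow> 'v edge set \<Rightarrow> real" where
  "Lbar E C \<gamma> p lam k A = (\<Sum>i<k. lam i) - (\<Sum>i<k. lam2 E C \<gamma> p lam k i A)"

text \<open>RG F sp vs i u1 u2 X: sp is the shortest path oracle, vs an enumeration of V
  (the order in which the loop "for every v in V" visits the vertices).\<close>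
primrec RG :: "('v edge set \<Rightarrow> real) \<Rightarrow> ('v \<Rightarrow> 'v \<Rightarrow> 'v edge set option) \<Rightarrow> 'v list
    \<Rightarrow> nat \<Rightarrow> 'v \<Rightarrow> 'v \<Rightarrow> 'v edge set \<Rightarrow> 'v edge set option" where
  "RG F sp vs 0 u1 u2 X = sp u1 u2"
| "RG F sp vs (Suc i) u1 u2 X =
     (case sp u1 u2 of
        None \<Rightarrow> None
      | Some S \<Rightarrow> Some (fst (foldl
          (\<lambda>(best, r) v.
             (case RG F sp vs i u1 v X of
                None \<Rightarrow> (best, r)
              | Some Q1 \<Rightarrow>
                  (case RG F sp vs i v u2 (X \<union> Q1) of
                     None \<Rightarrow> (best, r)
                   | Some Q2 \<Rightarrow>
                       (if F ((Q1 \<union> Q2) \<union> X) - F X > r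
                        then (Q1 \<union> Q2, F ((Q1 \<union> Q2) \<union> X) - F X)
                        else (best, r)))))
          (S, F (S \<union> X) - F X) vs)))"

end

theory Submission
  imports Defs
begin

text \<open>
  For a monotone submodular objective F, Recursive Greedy at depth i returns a u-v path whose
  marginal value is at least 1/(j+1) of that of any u-v path with at most 2^j edges, j \<le> i:
  split such a path at its middle vertex, which the loop over all vertices tries; by induction
  each half is approximated within j, the second one relative to the set already chosen for the
  first, and submodularity adds up the two halves at the cost of one more unit of the factor.

  The surrogate damage Lbar is monotone and submodular, because each rate lam2 is the product
  of a factor lam1 turning unions into minima with a factor that is multiplicative on unions
  and intersections. It is sandwiched as Lam \<le> Lbar \<le> (b + 1) Lam: the rates lam2 are feasible
  for the throughput LP, and any feasible rate vector loses at least 1/(b + 1) of what lam2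
  loses, since every user path meets at most b shared edges.
\<close>

lemma path_edges_Cons_Cons: "path_edges (a # b # xs) = insert (a, b) (path_edges (b # xs))"
  by (simp add: path_edges_def)

lemma path_edges_append:
  "path_edges (xs @ ys) = path_edges xs \<union> path_edges ys \<union>
     (if xs \<noteq> [] \<and> ys \<noteq> [] then {(last xs, hd ys)} else {})"
proof (induction xs)
  case Nil
  then show ?case by (simp add: path_edges_def)
next
  case (Cons a xs)
  then show ?case
    by (cases xs; cases ys) (auto simp: path_edges_def)
qed

lemma card_path_edges: "distinct xs \<Longrightarrow> card (path_edges xs) = length xs - 1"
proof (induction xs rule: induct_list012)
  case (3 a b xs)
  have "(a, b) \<notin> path_edges (b # xs)"
    using "3.prems" by (auto simp: path_edges_def dest: set_zip_leftD)
  then show ?case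
    using 3 by (simp add: path_edges_Cons_Cons path_edges_def)
qed (simp_all add: path_edges_def)

lemma st_path_subset: "st_path E u v S \<Longrightarrow> S \<subseteq> E"
  by (auto simp: st_path_def path_edges_def is_vpath_def)

lemma st_path_refl: "st_path E u u {}"
  unfolding st_path_def
  by (rule exI[of _ "[u]"]) (simp add: is_vpath_def path_edges_def)

lemma st_path_loop_empty:
  assumes "st_path E u u S"
  shows "S = {}"
proof -
  obtain xs where xs: "is_vpath E xs" "hd xs = u" "last xs = u" "S = path_edges xs"
    using assms by (auto simp: st_path_def)
  have "distinct xs" "xs \<noteq> []"
    using xs(1) by (auto simp: is_vpath_def)
  moreover have "xs ! 0 = xs ! (length xs - 1)"
    using xs(2,3) \<open>xs \<noteq> []\<close> by (simp add: hd_conv_nth last_conv_nth)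
  ultimately have "length xs - 1 = 0"
    by (simp add: nth_eq_iff_index_eq)
  then show ?thesis
    using xs(4) \<open>xs \<noteq> []\<close> by (cases xs) (auto simp: path_edges_def)
qed

lemma st_path_card_le_1:
  assumes "st_path E u v S" "card S \<le> 1"
  shows "S = (if u = v then {} else {(u, v)})"
proof -
  obtain xs where xs: "is_vpath E xs" "hd xs = u" "last xs = v" "S = path_edges xs"
    using assms(1) by (auto simp: st_path_def)
  have d: "distinct xs" "xs \<noteq> []"
    using xs(1) by (auto simp: is_vpath_def)
  have "length xs \<le> 2"
    using card_path_edges[OF d(1)] assms(2) xs(4) by simp
  then consider "xs = [u]" | "xs = [u, v]"
    using d(2) xs(2,3) by (cases xs; cases "tl xs") auto
  then show ?thesis
    using d(1) xs(2,3,4) by cases (auto simp: path_edges_def)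
qed

lemma st_path_endpoints:
  assumes "st_path E u v S" "S \<noteq> {}"
  shows "u \<in> Domain S" "v \<in> Range S"
proof -
  obtain xs where xs: "hd xs = u" "last xs = v" "S = path_edges xs"
    using assms(1) by (auto simp: st_path_def)
  obtain a b ys where xs_eq: "xs = a # b # ys"
    using xs(3) assms(2) by (cases xs; cases "tl xs") (auto simp: path_edges_def)
  show "u \<in> Domain S"
    using xs xs_eq by (auto simp: path_edges_Cons_Cons)
  have "butlast xs \<noteq> []" "xs = butlast xs @ [last xs]"
    using xs_eq by auto
  then have "(last (butlast xs), v) \<in> S"
    using xs(2,3) path_edges_append[of "butlast xs" "[last xs]"] by auto
  then show "v \<in> Range S" by blast
qed

lemma st_path_split:
  assumes P: "st_path E u w P" and m: "m \<le> card P"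
  obtains v P1 P2 where "st_path E u v P1" "st_path E v w P2" "P = P1 \<union> P2"
    "card P1 = m" "card P2 = card P - m"
proof -
  obtain xs where xs: "is_vpath E xs" "hd xs = u" "last xs = w" "P = path_edges xs"
    using P by (auto simp: st_path_def)
  have d: "distinct xs" "xs \<noteq> []"
    using xs(1) by (auto simp: is_vpath_def)
  have m_lt: "m < length xs"
    using m card_path_edges[OF d(1)] xs(4) d(2) by (cases xs) auto
  define v ys zs where "v = xs ! m" and "ys = take m xs" and "zs = drop (Suc m) xs"
  have xs_split: "xs = ys @ v # zs"
    using m_lt by (simp add: ys_def zs_def v_def id_take_nth_drop)
  define P1 P2 where "P1 = path_edges (ys @ [v])" and "P2 = path_edges (v # zs)"
  have PP: "P = P1 \<union> P2"
    using xs(4) xs_split path_edges_append[of ys "v # zs"] path_edges_append[of ys "[v]"]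
    by (auto simp: P1_def P2_def path_edges_def)
  have dist: "distinct (ys @ [v])" "distinct (v # zs)"
    using d(1) xs_split by auto
  have sub: "P1 \<subseteq> E" "P2 \<subseteq> E"
    using PP xs(1,4) by (auto simp: is_vpath_def path_edges_def)
  have "st_path E u v P1"
    unfolding st_path_def
    by (rule exI[of _ "ys @ [v]"])
      (use dist sub xs(2) xs_split in \<open>cases ys; auto simp: is_vpath_def P1_def path_edges_def\<close>)
  moreover have "st_path E v w P2"
    unfolding st_path_def
    by (rule exI[of _ "v # zs"])
      (use dist sub xs(3) xs_split in \<open>auto simp: is_vpath_def P2_def path_edges_def\<close>)
  moreover have "card P1 = m" "card P2 = card P - m"
    using card_path_edges[OF dist(1)] card_path_edges[OF dist(2)] card_path_edges[OF d(1)]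
      m_lt xs(4) by (simp_all add: P1_def P2_def ys_def zs_def)
  ultimately show ?thesis
    using PP that by blast
qed

lemma is_vpath_rtrancl_nth:
  "is_vpath E xs \<Longrightarrow> i \<le> j \<Longrightarrow> j < length xs \<Longrightarrow> (xs ! i, xs ! j) \<in> E\<^sup>*"
proof (induction j)
  case (Suc j)
  show ?case
  proof (cases "i = Suc j")
    case False
    then have "(xs ! i, xs ! j) \<in> E\<^sup>*"
      using Suc by auto
    moreover have "(xs ! j, xs ! Suc j) \<in> set (zip xs (tl xs))"
      using Suc.prems by (auto simp: in_set_zip nth_tl intro!: exI[of _ j])
    then have "(xs ! j, xs ! Suc j) \<in> E"
      using Suc.prems by (auto simp: is_vpath_def)
    ultimately show ?thesis by auto
  qed simp
qed simp

lemma is_vpath_trancl_nth: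
  assumes "is_vpath E xs" "i < j" "j < length xs"
  shows "(xs ! i, xs ! j) \<in> E\<^sup>+"
proof -
  have "(xs ! i, xs ! (j - 1)) \<in> E\<^sup>*"
    using assms by (intro is_vpath_rtrancl_nth) auto
  moreover have "(xs ! (j - 1), xs ! (j - 1 + 1)) \<in> set (zip xs (tl xs))"
    using assms by (auto simp: in_set_zip nth_tl intro!: exI[of _ "j - 1"])
  then have "(xs ! (j - 1), xs ! j) \<in> E"
    using assms by (auto simp: is_vpath_def)
  ultimately show ?thesis by auto
qed

lemma st_path_append:
  assumes "acyclic E" and P1: "st_path E a b Q1" and P2: "st_path E b c Q2"
  shows "st_path E a c (Q1 \<union> Q2)"
proof -
  obtain xs where xs: "is_vpath E xs" "hd xs = a" "last xs = b" "Q1 = path_edges xs"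
    using P1 by (auto simp: st_path_def)
  obtain ys where ys: "is_vpath E ys" "hd ys = b" "last ys = c" "Q2 = path_edges ys"
    using P2 by (auto simp: st_path_def)
  have ne: "xs \<noteq> []" "ys \<noteq> []"
    using xs ys by (auto simp: is_vpath_def)
  define zs where "zs = butlast xs @ ys"
  have xs_eq: "xs = butlast xs @ [b]"
    using ne xs(3) by (metis append_butlast_last_id)
  have edges: "path_edges zs = Q1 \<union> Q2"
  proof (cases "butlast xs = []")
    case True
    then have "xs = [b]"
      using xs_eq by simp
    then show ?thesis
      using xs ys by (simp add: zs_def True path_edges_def)
  next
    case False
    have "Q1 = path_edges (butlast xs) \<union> {(last (butlast xs), b)}"
      using xs(4) xs_eq False path_edges_append[of "butlast xs" "[b]"]
      by (simp add: path_edges_def)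
    then show ?thesis
      using path_edges_append[of "butlast xs" ys] False ne ys(2,4) by (auto simp: zs_def)
  qed
  have "set (butlast xs) \<inter> set ys = {}"
  proof (rule ccontr)
    assume "set (butlast xs) \<inter> set ys \<noteq> {}"
    then obtain x where x1: "x \<in> set (butlast xs)" and x2: "x \<in> set ys"
      by auto
    obtain i where i: "i < length xs - 1" "xs ! i = x"
      using x1 by (auto simp: in_set_conv_nth nth_butlast)
    have "(x, b) \<in> E\<^sup>+"
      using is_vpath_trancl_nth[OF xs(1), of i "length xs - 1"] i ne xs(3)
      by (simp add: last_conv_nth)
    moreover obtain j where j: "j < length ys" "ys ! j = x"
      using x2 by (metis in_set_conv_nth)
    have "(b, x) \<in> E\<^sup>*"
      using is_vpath_rtrancl_nth[OF ys(1), of 0 j] j ys(2) ne by (simp add: hd_conv_nth)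
    ultimately have "(x, x) \<in> E\<^sup>+"
      by auto
    then show False
      using \<open>acyclic E\<close> by (auto simp: acyclic_def)
  qed
  then have "distinct zs"
    using xs(1) ys(1) by (auto simp: is_vpath_def zs_def distinct_butlast)
  moreover have "Q1 \<subseteq> E" "Q2 \<subseteq> E"
    using xs ys by (auto simp: is_vpath_def path_edges_def)
  ultimately have "is_vpath E zs"
    using edges ne by (auto simp: is_vpath_def zs_def path_edges_def)
  moreover have "hd zs = a"
    using xs ne xs_eq by (cases "butlast xs") (auto simp: zs_def ys(2))
  moreover have "last zs = c"
    using ys ne by (simp add: zs_def)
  ultimately show ?thesis
    using edges by (auto simp: st_path_def)
qed

definition submodular :: "('a set \<Rightarrow> real) \<Rightarrow> bool" where
  "submodular F \<longleftrightarrow> (\<forall>A B. F (A \<union> B) + F (A \<inter> B) \<le> F A + F B)"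

definition marginal :: "('a set \<Rightarrow> real) \<Rightarrow> 'a set \<Rightarrow> 'a set \<Rightarrow> real" where
  "marginal F X A = F (A \<union> X) - F X"

lemma marginal_empty [simp]: "marginal F X {} = 0"
  by (simp add: marginal_def)

lemma marginal_nonneg: "mono F \<Longrightarrow> 0 \<le> marginal F X A"
  by (simp add: marginal_def monoD)

lemma marginal_Un: "marginal F X (A \<union> B) = marginal F X A + marginal F (X \<union> A) B"
  by (simp add: marginal_def Un_ac)

lemma marginal_Un_le:
  assumes "mono F" "submodular F"
  shows "marginal F X (A \<union> B) \<le> marginal F X A + marginal F X B"
proof -
  have "F ((A \<union> X) \<union> (B \<union> X)) + F ((A \<union> X) \<inter> (B \<union> X)) \<le> F (A \<union> X) + F (B \<union> X)"
    using assms(2) by (simp add: submodular_def)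
  moreover have "F X \<le> F ((A \<union> X) \<inter> (B \<union> X))"
    using assms(1) by (auto intro: monoD)
  ultimately show ?thesis
    by (simp add: marginal_def Un_ac)
qed

lemma marginal_le_marginal_after:
  "mono F \<Longrightarrow> marginal F X B \<le> marginal F (X \<union> A) B + marginal F X A"
  by (simp add: marginal_def Un_ac monoD)

lemma marginal_halves_le:
  assumes "mono F" "submodular F"
    and P1: "marginal F X P1 \<le> \<alpha> * marginal F X Q1"
    and P2: "marginal F (X \<union> Q1) P2 \<le> \<alpha> * marginal F (X \<union> Q1) Q2"
  shows "marginal F X (P1 \<union> P2) \<le> (\<alpha> + 1) * marginal F X (Q1 \<union> Q2)"
proof -
  have "marginal F X (P1 \<union> P2) \<le> marginal F X P1 + marginal F X P2"
    using assms(1,2) by (rule marginal_Un_le)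
  also have "\<dots> \<le> marginal F X P1 + marginal F (X \<union> Q1) P2 + marginal F X Q1"
    using marginal_le_marginal_after[OF assms(1)] by simp
  also have "\<dots> \<le> \<alpha> * marginal F X (Q1 \<union> Q2) + marginal F X Q1"
    using P1 P2 by (simp add: marginal_Un distrib_left)
  also have "\<dots> \<le> (\<alpha> + 1) * marginal F X (Q1 \<union> Q2)"
    using marginal_nonneg[OF assms(1)] by (simp add: marginal_Un distrib_right)
  finally show ?thesis .
qed

lemma foldl_preserves: "(\<And>x v. P x \<Longrightarrow> P (g x v)) \<Longrightarrow> P x \<Longrightarrow> P (foldl g x vs)"
  by (induction vs arbitrary: x) auto

lemma foldl_visit_ge:
  fixes g :: "'a \<times> 'b::order \<Rightarrow> 'c \<Rightarrow> 'a \<times> 'b"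
  assumes step: "\<And>x v. P x \<Longrightarrow> P (g x v) \<and> snd x \<le> snd (g x v)"
    and visit: "\<And>x. P x \<Longrightarrow> c \<le> snd (g x w)"
    and "w \<in> set vs" "P x"
  shows "c \<le> snd (foldl g x vs)"
  using assms(3,4)
proof (induction vs arbitrary: x)
  case (Cons v vs)
  show ?case
  proof (cases "w = v")
    case True
    have "P (foldl g (g x v) vs) \<and> c \<le> snd (foldl g (g x v) vs)"
      by (rule foldl_preserves[where P = "\<lambda>y. P y \<and> c \<le> snd y"])
        (use step visit Cons.prems True in \<open>auto intro: order_trans\<close>)
    then show ?thesis by simp
  next
    case False
    then show ?thesis
      using Cons step by auto
  qed
qed simp

definition rg_step :: "('v edge set \<Rightarrow> real) \<Rightarrow> ('v \<Rightarrow> 'v \<Rightarrow> 'v edge set option)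
    \<Rightarrow> 'v list \<Rightarrow> nat \<Rightarrow> 'v \<Rightarrow> 'v \<Rightarrow> 'v edge set
    \<Rightarrow> 'v edge set \<times> real \<Rightarrow> 'v \<Rightarrow> 'v edge set \<times> real" where
  "rg_step F sp vs i u1 u2 X = (\<lambda>(best, r) v.
     (case RG F sp vs i u1 v X of
        None \<Rightarrow> (best, r)
      | Some Q1 \<Rightarrow>
          (case RG F sp vs i v u2 (X \<union> Q1) of
             None \<Rightarrow> (best, r)
           | Some Q2 \<Rightarrow>
               (if F ((Q1 \<union> Q2) \<union> X) - F X > r
                then (Q1 \<union> Q2, F ((Q1 \<union> Q2) \<union> X) - F X)
                else (best, r)))))"

lemma RG_Suc_eq [simp]:
  "RG F sp vs (Suc i) u1 u2 X =
     map_option (\<lambda>S. fst (foldl (rg_step F sp vs i u1 u2 X) (S, marginal F X S) vs)) (sp u1 u2)"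
  by (simp add: rg_step_def marginal_def split: option.split)

declare RG.simps(2) [simp del]

lemma rg_step_value:
  assumes "snd y = marginal F X (fst y)"
  shows "snd (rg_step F sp vs i u1 u2 X y v) = marginal F X (fst (rg_step F sp vs i u1 u2 X y v))
    \<and> snd y \<le> snd (rg_step F sp vs i u1 u2 X y v)"
  using assms by (cases y) (auto simp: rg_step_def marginal_def split: option.split)

lemma rg_step_candidate:
  "RG F sp vs i u1 v X = Some Q1 \<Longrightarrow> RG F sp vs i v u2 (X \<union> Q1) = Some Q2 \<Longrightarrow>
   marginal F X (Q1 \<union> Q2) \<le> snd (rg_step F sp vs i u1 u2 X y v)"
  by (cases y) (auto simp: rg_step_def marginal_def)

lemma RG_Suc_ge_candidate:
  assumes "RG F sp vs (Suc i) u1 u2 X = Some Q" "v \<in> set vs"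
    and "RG F sp vs i u1 v X = Some Q1" "RG F sp vs i v u2 (X \<union> Q1) = Some Q2"
  shows "marginal F X (Q1 \<union> Q2) \<le> marginal F X Q"
proof -
  let ?g = "rg_step F sp vs i u1 u2 X"
  let ?P = "\<lambda>y. snd y = marginal F X (fst y)"
  have step: "?P (?g y w) \<and> snd y \<le> snd (?g y w)" if "?P y" for y w
    by (rule rg_step_value[OF that])
  obtain S where "Q = fst (foldl ?g (S, marginal F X S) vs)"
    using assms(1) by auto
  moreover have start: "?P (S, marginal F X S)"
    by simp
  moreover have "?P (foldl ?g (S, marginal F X S) vs)"
    by (rule foldl_preserves[where P = ?P, OF _ start]) (use step in blast)
  moreover have "marginal F X (Q1 \<union> Q2) \<le> snd (foldl ?g (S, marginal F X S) vs)"
    using rg_step_candidate[OF assms(3,4)] assms(2) start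
    by (intro foldl_visit_ge[where P = ?P and g = ?g, OF step])
  ultimately show ?thesis by simp
qed

context
  fixes E :: "'v edge set" and sp :: "'v \<Rightarrow> 'v \<Rightarrow> 'v edge set option"
  assumes dag: "acyclic E" and sp: "valid_sp E sp"
begin

lemma RG_eq_None_iff: "RG F sp vs i u1 u2 X = None \<longleftrightarrow> (\<nexists>S. st_path E u1 u2 S)"
  using sp by (cases i) (auto simp: valid_sp_def)

lemma RG_st_path: "RG F sp vs i u1 u2 X = Some Q \<Longrightarrow> st_path E u1 u2 Q"
proof (induction i arbitrary: u1 u2 X Q)
  case 0
  then show ?case
    using sp by (simp add: valid_sp_def)
next
  case (Suc i)
  let ?g = "rg_step F sp vs i u1 u2 X"
  have step: "st_path E u1 u2 (fst (?g y v))" if "st_path E u1 u2 (fst y)" for y v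
    using that st_path_append[OF dag Suc.IH Suc.IH]
    by (cases y) (auto simp: rg_step_def split: option.split)
  obtain S where "sp u1 u2 = Some S" "Q = fst (foldl ?g (S, marginal F X S) vs)"
    using Suc.prems by auto
  moreover have "st_path E u1 u2 S"
    using sp \<open>sp u1 u2 = Some S\<close> by (simp add: valid_sp_def)
  then have "st_path E u1 u2 (fst (foldl ?g (S, marginal F X S) vs))"
    using step foldl_preserves[where P = "\<lambda>y. st_path E u1 u2 (fst y)" and g = ?g] by simp
  ultimately show ?case by simp
qed

lemma RG_approx:
  assumes "mono F" "submodular F" "Field E \<subseteq> set vs"
  shows "st_path E u1 u2 P \<Longrightarrow> card P \<le> 2 ^ j \<Longrightarrow> j \<le> i \<Longrightarrow>
    \<exists>Q. RG F sp vs i u1 u2 X = Some Q \<and> marginal F X P \<le> (real j + 1) * marginal F X Q"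
proof (induction i arbitrary: u1 u2 X P j)
  case 0
  obtain S where S: "sp u1 u2 = Some S" "st_path E u1 u2 S" "card S \<le> card P"
    using sp "0.prems"(1) unfolding valid_sp_def by (metis option.exhaust)
  then have "S = P"
    using st_path_card_le_1[OF S(2)] st_path_card_le_1[OF "0.prems"(1)] "0.prems" by simp
  then show ?case
    using S "0.prems" by simp
next
  case (Suc i)
  obtain Q where Q: "RG F sp vs (Suc i) u1 u2 X = Some Q"
    using Suc.prems(1) RG_eq_None_iff[of F vs "Suc i" u1 u2 X] by auto
  have in_vs: "Field S \<subseteq> set vs" if "st_path E u v S" for u v S
    using st_path_subset[OF that] assms(3) by (auto simp: Field_def)
  have "marginal F X P \<le> (real j + 1) * marginal F X Q"
  proof (cases "P = {}")
    case True
    then show ?thesis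
      using marginal_nonneg[OF assms(1)] by simp
  next
    case P_nonempty: False
    show ?thesis
    proof (cases "j \<le> i")
      case True
      \<comment> \<open>the loop also tries v = u2, whose second recursive call returns the empty path\<close>
      obtain Q1 where Q1: "RG F sp vs i u1 u2 X = Some Q1"
        "marginal F X P \<le> (real j + 1) * marginal F X Q1"
        using Suc.IH[OF Suc.prems(1,2) True] by blast
      obtain Q2 where Q2: "RG F sp vs i u2 u2 (X \<union> Q1) = Some Q2"
        using RG_eq_None_iff[of F vs i u2 u2 "X \<union> Q1"] st_path_refl[of E u2] by auto
      have "Q2 = {}"
        using st_path_loop_empty[OF RG_st_path[OF Q2]] .
      moreover have "u2 \<in> set vs"
        using st_path_endpoints(2)[OF Suc.prems(1) P_nonempty] in_vs[OF Suc.prems(1)]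
        by (auto simp: Field_def)
      ultimately have "marginal F X Q1 \<le> marginal F X Q"
        using RG_Suc_ge_candidate[OF Q _ Q1(1) Q2] by simp
      then show ?thesis
        using Q1(2) by (auto intro: order_trans)
    next
      case False
      then have j: "j = Suc i"
        using Suc.prems(3) by simp
      obtain v P1 P2 where P1: "st_path E u1 v P1" and P2: "st_path E v u2 P2"
        and PP: "P = P1 \<union> P2" and card: "card P1 = card P div 2" "card P2 = card P - card P div 2"
        using st_path_split[OF Suc.prems(1), of "card P div 2"] by auto
      have "card P1 \<le> 2 ^ i" "card P2 \<le> 2 ^ i"
        using card Suc.prems(2) j by simp_all
      then obtain Q1 Q2 where Q1: "RG F sp vs i u1 v X = Some Q1"
          "marginal F X P1 \<le> (real i + 1) * marginal F X Q1"
        and Q2: "RG F sp vs i v u2 (X \<union> Q1) = Some Q2"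
          "marginal F (X \<union> Q1) P2 \<le> (real i + 1) * marginal F (X \<union> Q1) Q2"
        using Suc.IH[OF P1, of i X] Suc.IH[OF P2, of i] by blast
      have "v \<in> set vs"
        using PP P_nonempty st_path_endpoints(2)[OF P1] st_path_endpoints(1)[OF P2]
          in_vs[OF P1] in_vs[OF P2] by (cases "P1 = {}") (auto simp: Field_def)
      then have "marginal F X (Q1 \<union> Q2) \<le> marginal F X Q"
        using RG_Suc_ge_candidate[OF Q _ Q1(1) Q2(1)] by simp
      moreover have "marginal F X P \<le> (real i + 1 + 1) * marginal F X (Q1 \<union> Q2)"
        unfolding PP by (rule marginal_halves_le[OF assms(1,2) Q1(2) Q2(2)])
      ultimately show ?thesis
        using j marginal_nonneg[OF assms(1)] by (auto intro: order_trans mult_left_mono)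
    qed
  qed
  then show ?case
    using Q by blast
qed

end

lemma Min_image_min:
  fixes f g :: "'a \<Rightarrow> 'b::linorder"
  assumes "finite S" "S \<noteq> {}"
  shows "Min ((\<lambda>e. min (f e) (g e)) ` S) = min (Min (f ` S)) (Min (g ` S))"
  using assms
  by (induction S rule: finite_ne_induct) (simp_all add: min.assoc min.left_commute min.commute)

lemma one_minus_prod_le_sum:
  fixes c :: "'a \<Rightarrow> real"
  assumes "finite S" "\<forall>e\<in>S. 0 \<le> c e \<and> c e \<le> 1"
  shows "1 - prod c S \<le> (\<Sum>e\<in>S. 1 - c e)"
  using assms
proof (induction S rule: finite_induct)
  case (insert x S)
  have "0 \<le> prod c S" "prod c S \<le> 1" "0 \<le> c x" "c x \<le> 1"
    using insert by (auto intro!: prod_nonneg prod_le_1)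
  then have "1 - c x * prod c S \<le> (1 - c x) + (1 - prod c S)"
    using mult_nonneg_nonneg[of "1 - c x" "1 - prod c S"] by (simp add: algebra_simps)
  then show ?case
    using insert by simp
qed simp

text \<open>
  Read mU, pU and mI, pI as values at A \<union> B and A \<inter> B: the product of a factor that takes
  minima on unions with an antitone factor multiplicative on unions and intersections is then
  supermodular.
\<close>

lemma min_mult_supermodular_ineq:
  fixes mA mB mU mI pA pB pU pI :: real
  assumes "0 \<le> mA" "0 \<le> mB" "mU = min mA mB" "mA \<le> mI" "mB \<le> mI"
    and "0 \<le> pU" "pU \<le> pA" "pU \<le> pB" "pA \<le> pI" "pB \<le> pI" "pU * pI = pA * pB"
  shows "mA * pA + mB * pB \<le> mU * pU + mI * pI"
proof -
  have sum_le: "pA + pB \<le> pI + pU"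
  proof (cases "pI = 0")
    case False
    have "0 \<le> (pI - pA) * (pI - pB)"
      using assms by simp
    then have "0 \<le> pI * (pI + pU - pA - pB)"
      using assms(11) by (simp add: algebra_simps)
    then show ?thesis
      using False assms by (simp add: zero_le_mult_iff)
  qed (use assms in simp)
  have ordered: "x * qA + y * qB \<le> x * pU + mI * pI"
    if "0 \<le> x" "x \<le> y" "y \<le> mI" "qA + qB \<le> pI + pU" "pU \<le> qA" "qB \<le> pI" for x y qA qB
  proof -
    have "x * (qA - pU) \<le> x * (pI - qB)"
      using that by (intro mult_left_mono) auto
    also have "\<dots> \<le> y * (pI - qB)"
      using that by (intro mult_right_mono) auto
    finally have "x * qA + y * qB \<le> x * pU + y * pI"
      by (simp add: algebra_simps)
    also have "y * pI \<le> mI * pI"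
      using that assms by (intro mult_right_mono) auto
    finally show ?thesis by simp
  qed
  show ?thesis
  proof (cases "mA \<le> mB")
    case True
    then show ?thesis
      using ordered[of mA mB pA pB] assms sum_le by auto
  next
    case False
    then show ?thesis
      using ordered[of mB mA pB pA] assms sum_le by (auto simp: add.commute)
  qed
qed

locale network =
  fixes E :: "'v edge set" and C :: "'v edge \<Rightarrow> real" and \<gamma> :: real
    and p :: "nat \<Rightarrow> 'v edge set" and lam :: "nat \<Rightarrow> real" and k :: nat
  assumes finite_E: "finite E" and gamma_nonneg: "0 \<le> \<gamma>" and gamma_le: "\<forall>e \<in> E. \<gamma> \<le> C e"
    and lam_nonneg: "\<forall>i<k. 0 \<le> lam i"
begin

abbreviation "cap A e \<equiv> Ct C \<gamma> A e"
abbreviation "rate1 i A \<equiv> lam1 E C \<gamma> p lam k i A"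
abbreviation "rate2 i A \<equiv> lam2 E C \<gamma> p lam k i A"
abbreviation "Fbar \<equiv> Lbar E C \<gamma> p lam k"

text \<open>At load 0 the quotient is c / 0 = 0, exactly as in lam2.\<close>
definition ratio :: "'v edge \<Rightarrow> real \<Rightarrow> real" where
  "ratio e c = (if c \<le> load p lam k e then c / load p lam k e else 1)"

definition shared_factor :: "nat \<Rightarrow> 'v edge set \<Rightarrow> real" where
  "shared_factor i A = (\<Prod>e \<in> p i \<inter> E2 E p k. ratio e (cap A e))"

definition feasible :: "'v edge set \<Rightarrow> (nat \<Rightarrow> real) \<Rightarrow> bool" where
  "feasible A l \<longleftrightarrow> (\<forall>i<k. 0 \<le> l i \<and> l i \<le> lam i) \<and>
     (\<forall>e \<in> E. (\<Sum>i \<in> users p k e. l i) \<le> cap A e)"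

lemma finite_users: "finite (users p k e)"
  by (simp add: users_def)

lemma users_eq: "users p k e = {i \<in> {..<k}. e \<in> p i}"
  by (auto simp: users_def)

lemma finite_E1: "finite (E1 E p k)" and finite_E2: "finite (E2 E p k)"
  using finite_E by (simp_all add: E1_def E2_def)

lemma load_nonneg: "0 \<le> load p lam k e"
  unfolding load_def by (rule sum_nonneg) (auto simp: users_def lam_nonneg)

lemma cap_nonneg: "e \<in> E \<Longrightarrow> 0 \<le> cap A e"
  using gamma_le gamma_nonneg by (force simp: Ct_def)

lemma cap_antimono: "A \<subseteq> B \<Longrightarrow> cap B e \<le> cap A e"
  using gamma_nonneg by (auto simp: Ct_def)

lemma cap_Un: "cap (A \<union> B) e = min (cap A e) (cap B e)"
  using gamma_nonneg by (auto simp: Ct_def)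

lemma cap_Int: "cap (A \<inter> B) e = max (cap A e) (cap B e)"
  using gamma_nonneg by (auto simp: Ct_def)

lemma ratio_bounds: "0 \<le> c \<Longrightarrow> 0 \<le> ratio e c \<and> ratio e c \<le> 1"
  using load_nonneg[of e] by (auto simp: ratio_def divide_le_eq_1)

lemma ratio_mono: "0 \<le> c \<Longrightarrow> c \<le> d \<Longrightarrow> ratio e c \<le> ratio e d"
  using load_nonneg[of e] by (auto simp: ratio_def divide_le_eq_1 divide_right_mono)

lemma ratio_cap_bounds: "e \<in> E2 E p k \<Longrightarrow> 0 \<le> ratio e (cap A e) \<and> ratio e (cap A e) \<le> 1"
  by (rule ratio_bounds, rule cap_nonneg) (simp add: E2_def)

lemma rate2_eq: "rate2 i A = rate1 i A * shared_factor i A"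
  unfolding lam2_def shared_factor_def ratio_def
  using finite_E2 by (subst prod.inter_filter[symmetric]) simp_all

lemma shared_factor_bounds: "0 \<le> shared_factor i A \<and> shared_factor i A \<le> 1"
  unfolding shared_factor_def
  by (intro conjI prod_nonneg prod_le_1) (auto dest: ratio_cap_bounds)

lemma shared_factor_antimono:
  assumes "A \<subseteq> B"
  shows "shared_factor i B \<le> shared_factor i A"
proof -
  have "ratio e (cap B e) \<le> ratio e (cap A e)" if "e \<in> E2 E p k" for e
    using that assms by (intro ratio_mono cap_nonneg cap_antimono) (auto simp: E2_def)
  then show ?thesis
    unfolding shared_factor_def using ratio_cap_bounds by (intro prod_mono) auto
qed

lemma shared_factor_Un_Int:
  "shared_factor i (A \<union> B) * shared_factor i (A \<inter> B) = shared_factor i A * shared_factor i B"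
proof -
  have "ratio e (cap (A \<union> B) e) * ratio e (cap (A \<inter> B) e) = ratio e (cap A e) * ratio e (cap B e)"
    for e
    by (simp add: cap_Un cap_Int min_def max_def)
  then show ?thesis
    unfolding shared_factor_def by (simp add: prod.distrib[symmetric])
qed

lemma rate1_bounds: "i < k \<Longrightarrow> 0 \<le> rate1 i A \<and> rate1 i A \<le> lam i"
  using lam_nonneg finite_E1 cap_nonneg by (auto simp: lam1_def Min_ge_iff E1_def)

lemma rate1_antimono: "A \<subseteq> B \<Longrightarrow> rate1 i B \<le> rate1 i A"
  using finite_E1 cap_antimono[of A B]
  by (auto simp: lam1_def Min_le_iff Min_ge_iff min_le_iff_disj intro: order_trans)

lemma rate1_Un: "rate1 i (A \<union> B) = min (rate1 i A) (rate1 i B)"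
proof (cases "p i \<inter> E1 E p k = {}")
  case False
  have "Min (cap (A \<union> B) ` (p i \<inter> E1 E p k)) =
      min (Min (cap A ` (p i \<inter> E1 E p k))) (Min (cap B ` (p i \<inter> E1 E p k)))"
    unfolding cap_Un using finite_E1 False by (intro Min_image_min) auto
  then show ?thesis
    using False by (simp add: lam1_def min.assoc min.left_commute min.commute)
qed (simp add: lam1_def)

lemma rate1_le_cap: "e \<in> p i \<inter> E1 E p k \<Longrightarrow> rate1 i A \<le> cap A e"
  using finite_E1 by (auto simp: lam1_def min_le_iff_disj)

lemma rate2_bounds: "i < k \<Longrightarrow> 0 \<le> rate2 i A \<and> rate2 i A \<le> rate1 i A"
  unfolding rate2_eq using rate1_bounds[of i A] shared_factor_bounds[of i A]
  by (simp add: mult_left_le)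

lemma rate2_antimono: "i < k \<Longrightarrow> A \<subseteq> B \<Longrightarrow> rate2 i B \<le> rate2 i A"
  unfolding rate2_eq
  using rate1_bounds rate1_antimono shared_factor_bounds shared_factor_antimono
  by (meson mult_mono order_trans)

lemma rate2_supermodular: "i < k \<Longrightarrow> rate2 i A + rate2 i B \<le> rate2 i (A \<union> B) + rate2 i (A \<inter> B)"
  unfolding rate2_eq
  by (rule min_mult_supermodular_ineq)
    (use rate1_bounds[of i] shared_factor_bounds[of i] rate1_Un[of i A B]
      rate1_antimono[of "A \<inter> B" _ i] shared_factor_antimono[of _ "A \<union> B" i]
      shared_factor_antimono[of "A \<inter> B" _ i] shared_factor_Un_Int[of i A B]
      in \<open>auto simp: mult.commute\<close>)

lemma mono_Lbar: "mono Fbar"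
  by (rule monoI) (auto simp: Lbar_def intro!: sum_mono rate2_antimono)

lemma submodular_Lbar: "submodular Fbar"
  unfolding submodular_def
proof (intro allI)
  fix A B
  have "(\<Sum>i<k. rate2 i A) + (\<Sum>i<k. rate2 i B) \<le>
      (\<Sum>i<k. rate2 i (A \<union> B)) + (\<Sum>i<k. rate2 i (A \<inter> B))"
    unfolding sum.distrib[symmetric] by (rule sum_mono) (simp add: rate2_supermodular)
  then show "Fbar (A \<union> B) + Fbar (A \<inter> B) \<le> Fbar A + Fbar B"
    unfolding Lbar_def by linarith
qed

lemma rate2_le_lam: "i < k \<Longrightarrow> rate2 i A \<le> lam i"
  using rate2_bounds rate1_bounds by (meson order_trans)

lemma Lbar_empty_nonneg: "0 \<le> Fbar {}"
  unfolding Lbar_def using sum_mono[of "{..<k}" "\<lambda>i. rate2 i {}" lam] rate2_le_lam by simp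

lemma shared_factor_le_ratio:
  assumes "e \<in> p i \<inter> E2 E p k"
  shows "shared_factor i A \<le> ratio e (cap A e)"
proof -
  have fin: "finite (p i \<inter> E2 E p k)"
    using finite_E2 by simp
  have "shared_factor i A = ratio e (cap A e) * (\<Prod>x \<in> p i \<inter> E2 E p k - {e}. ratio x (cap A x))"
    unfolding shared_factor_def using prod.remove[OF fin assms] by simp
  moreover have "(\<Prod>x \<in> p i \<inter> E2 E p k - {e}. ratio x (cap A x)) \<le> 1"
    using ratio_cap_bounds by (intro prod_le_1) auto
  moreover have "0 \<le> ratio e (cap A e)"
    using ratio_cap_bounds assms by blast
  ultimately show ?thesis
    by (simp add: mult_left_le)
qed

lemma rate2_le_lam_ratio:
  assumes "i < k" "e \<in> p i \<inter> E2 E p k"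
  shows "rate2 i A \<le> lam i * ratio e (cap A e)"
  unfolding rate2_eq
  using rate1_bounds[OF assms(1)] shared_factor_bounds shared_factor_le_ratio[OF assms(2)]
    lam_nonneg assms(1) by (intro mult_mono) auto

lemma load_mult_ratio_le:
  assumes "0 \<le> c"
  shows "load p lam k e * ratio e c \<le> c"
proof (cases "c \<le> load p lam k e")
  case True
  then show ?thesis
    using assms by (cases "load p lam k e = 0") (simp_all add: ratio_def)
qed (simp add: ratio_def)

lemma sum_users_rate2_le_cap:
  assumes "e \<in> E"
  shows "(\<Sum>i \<in> users p k e. rate2 i A) \<le> cap A e"
proof -
  have "card (users p k e) = 0 \<or> card (users p k e) = 1 \<or> 2 \<le> card (users p k e)"
    by linarith
  then have "users p k e = {} \<or> (\<exists>i. users p k e = {i}) \<or> 2 \<le> card (users p k e)"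
    using finite_users[of e] by (simp add: card_1_singleton_iff)
  then consider "users p k e = {}" | i where "users p k e = {i}" | "2 \<le> card (users p k e)"
    by blast
  then show ?thesis
  proof cases
    case 1
    then show ?thesis
      using cap_nonneg[OF assms] by simp
  next
    case (2 i)
    then have "i < k" "e \<in> p i \<inter> E1 E p k"
      using assms by (auto simp: users_def E1_def)
    then have "rate2 i A \<le> cap A e"
      using rate2_bounds[of i A] rate1_le_cap[of e i A] by linarith
    then show ?thesis
      using 2 by simp
  next
    case 3
    then have "e \<in> E2 E p k"
      using assms by (simp add: E2_def)
    then have "(\<Sum>i \<in> users p k e. rate2 i A) \<le> (\<Sum>i \<in> users p k e. lam i * ratio e (cap A e))"
      using rate2_le_lam_ratio by (intro sum_mono) (auto simp: users_def)
    also have "\<dots> = load p lam k e * ratio e (cap A e)"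
      by (simp add: load_def sum_distrib_right)
    also have "\<dots> \<le> cap A e"
      using load_mult_ratio_le cap_nonneg[OF assms] by blast
    finally show ?thesis .
  qed
qed

lemma feasible_rate2: "feasible A (\<lambda>i. rate2 i A)"
  using rate2_bounds rate2_le_lam sum_users_rate2_le_cap by (simp add: feasible_def)

lemma T_opt_eq_Sup: "T_opt E C \<gamma> p lam k A = Sup {(\<Sum>i<k. l i) | l. feasible A l}"
  by (simp add: T_opt_def feasible_def)

lemma Lam_le_Lbar: "Lam E C \<gamma> p lam k A \<le> Fbar A"
proof -
  have "bdd_above {(\<Sum>i<k. l i) | l. feasible A l}"
    by (rule bdd_aboveI[of _ "\<Sum>i<k. lam i"]) (auto simp: feasible_def intro!: sum_mono)
  moreover have "(\<Sum>i<k. rate2 i A) \<in> {(\<Sum>i<k. l i) | l. feasible A l}"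
    using feasible_rate2 by blast
  ultimately have "(\<Sum>i<k. rate2 i A) \<le> T_opt E C \<gamma> p lam k A"
    unfolding T_opt_eq_Sup by (rule cSup_upper[rotated])
  then show ?thesis
    by (simp add: Lam_def Lbar_def)
qed

lemma feasible_le_rate1:
  assumes l: "feasible A l" and "i < k"
  shows "l i \<le> rate1 i A"
proof -
  have le_cap: "l i \<le> cap A e" if e: "e \<in> p i \<inter> E1 E p k" for e
  proof -
    have "i \<in> users p k e" "card (users p k e) = 1"
      using e \<open>i < k\<close> by (simp_all add: users_def E1_def)
    then have "users p k e = {i}"
      by (metis card_1_singletonE singletonD)
    moreover have "(\<Sum>j \<in> users p k e. l j) \<le> cap A e"
      using l e by (simp add: feasible_def E1_def)
    ultimately show ?thesis
      by simp
  qed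
  show ?thesis
  proof (cases "p i \<inter> E1 E p k = {}")
    case True
    then show ?thesis
      using l \<open>i < k\<close> by (simp add: lam1_def feasible_def)
  next
    case False
    then have "l i \<le> Min (cap A ` (p i \<inter> E1 E p k))"
      using finite_E1 le_cap by (simp add: Min_ge_iff)
    then show ?thesis
      using False l \<open>i < k\<close> by (simp add: lam1_def feasible_def)
  qed
qed

lemma rate1_minus_rate2_le:
  assumes "i < k"
  shows "rate1 i A - rate2 i A \<le> lam i * (\<Sum>e \<in> p i \<inter> E2 E p k. 1 - ratio e (cap A e))"
proof -
  have "1 - shared_factor i A \<le> (\<Sum>e \<in> p i \<inter> E2 E p k. 1 - ratio e (cap A e))"
    unfolding shared_factor_def using finite_E2 ratio_cap_bounds
    by (intro one_minus_prod_le_sum) auto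
  then have "rate1 i A * (1 - shared_factor i A) \<le>
      lam i * (\<Sum>e \<in> p i \<inter> E2 E p k. 1 - ratio e (cap A e))"
    using rate1_bounds[OF assms] shared_factor_bounds lam_nonneg assms by (intro mult_mono) auto
  then show ?thesis
    by (simp add: rate2_eq algebra_simps)
qed

lemma load_shortfall_le:
  assumes l: "feasible A l" and "e \<in> E"
  shows "(1 - ratio e (cap A e)) * load p lam k e \<le> (\<Sum>i \<in> users p k e. lam i - l i)"
proof -
  have sum_eq: "(\<Sum>i \<in> users p k e. lam i - l i) = load p lam k e - (\<Sum>i \<in> users p k e. l i)"
    by (simp add: load_def sum_subtractf)
  have "(\<Sum>i \<in> users p k e. l i) \<le> cap A e"
    using l \<open>e \<in> E\<close> by (simp add: feasible_def)
  moreover have "0 \<le> (\<Sum>i \<in> users p k e. lam i - l i)"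
    using l by (intro sum_nonneg) (auto simp: users_def feasible_def)
  ultimately show ?thesis
  proof (cases "cap A e \<le> load p lam k e \<and> load p lam k e \<noteq> 0")
    case True
    then have "(1 - ratio e (cap A e)) * load p lam k e = load p lam k e - cap A e"
      by (simp add: ratio_def algebra_simps)
    then show ?thesis
      using sum_eq \<open>(\<Sum>i \<in> users p k e. l i) \<le> cap A e\<close> by linarith
  next
    case False
    then have "(1 - ratio e (cap A e)) * load p lam k e = 0"
      by (auto simp: ratio_def)
    then show ?thesis
      using \<open>0 \<le> (\<Sum>i \<in> users p k e. lam i - l i)\<close> by linarith
  qed
qed

lemma sum_paths_E2_swap:
  "(\<Sum>i<k. \<Sum>e \<in> p i \<inter> E2 E p k. f i e) = (\<Sum>e \<in> E2 E p k. \<Sum>i \<in> users p k e. f i e)"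
proof -
  have "p i \<inter> E2 E p k = {e \<in> E2 E p k. e \<in> p i}" for i
    by auto
  then show ?thesis
    unfolding users_eq using finite_E2 by (simp add: sum.swap_restrict)
qed

lemma Lbar_le_shortfall:
  assumes l: "feasible A l" and b: "\<forall>i<k. card (E2 E p k \<inter> p i) \<le> b"
  shows "Fbar A \<le> (real b + 1) * ((\<Sum>i<k. lam i) - (\<Sum>i<k. l i))"
proof -
  define d where "d i = lam i - l i" for i
  define w where "w e = 1 - ratio e (cap A e)" for e
  have d_nonneg: "0 \<le> d i" if "i < k" for i
    using l that by (simp add: feasible_def d_def)
  have "Fbar A = (\<Sum>i<k. lam i - rate1 i A) + (\<Sum>i<k. rate1 i A - rate2 i A)"
    by (simp add: Lbar_def sum_subtractf)
  also have "\<dots> \<le> (\<Sum>i<k. d i) + (\<Sum>i<k. \<Sum>e \<in> p i \<inter> E2 E p k. lam i * w e)"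
    using feasible_le_rate1[OF l] rate1_minus_rate2_le
    by (intro add_mono sum_mono) (auto simp: d_def w_def sum_distrib_left)
  also have "\<dots> = (\<Sum>i<k. d i) + (\<Sum>e \<in> E2 E p k. w e * load p lam k e)"
    by (simp add: sum_paths_E2_swap load_def sum_distrib_left mult.commute)
  also have "\<dots> \<le> (\<Sum>i<k. d i) + (\<Sum>e \<in> E2 E p k. \<Sum>i \<in> users p k e. d i)"
    using load_shortfall_le[OF l] by (intro add_mono sum_mono) (auto simp: w_def d_def E2_def)
  also have "\<dots> = (\<Sum>i<k. d i) + (\<Sum>i<k. d i * card (E2 E p k \<inter> p i))"
    by (simp add: sum_paths_E2_swap[symmetric] Int_commute mult.commute)
  also have "\<dots> \<le> (\<Sum>i<k. d i) + (\<Sum>i<k. d i * b)"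
    using b d_nonneg by (intro add_mono sum_mono mult_left_mono) auto
  also have "\<dots> = (real b + 1) * (\<Sum>i<k. d i)"
    by (simp add: sum_distrib_left[symmetric] mult.commute[of _ "real b"] distrib_right)
  also have "\<dots> = (real b + 1) * ((\<Sum>i<k. lam i) - (\<Sum>i<k. l i))"
    by (simp add: d_def sum_subtractf)
  finally show ?thesis .
qed

lemma Lbar_le_Lam:
  assumes "\<forall>i<k. card (E2 E p k \<inter> p i) \<le> b"
  shows "Fbar A \<le> (real b + 1) * Lam E C \<gamma> p lam k A"
proof -
  have "T_opt E C \<gamma> p lam k A \<le> (\<Sum>i<k. lam i) - Fbar A / (real b + 1)"
    unfolding T_opt_eq_Sup
  proof (rule cSup_least)
    show "{(\<Sum>i<k. l i) | l. feasible A l} \<noteq> {}"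
      using feasible_rate2 by blast
  next
    fix x
    assume "x \<in> {(\<Sum>i<k. l i) | l. feasible A l}"
    then obtain l where "feasible A l" "x = (\<Sum>i<k. l i)"
      by blast
    then have "Fbar A / (real b + 1) \<le> (\<Sum>i<k. lam i) - x"
      using Lbar_le_shortfall[OF _ assms] by (simp add: pos_divide_le_eq mult.commute)
    then show "x \<le> (\<Sum>i<k. lam i) - Fbar A / (real b + 1)"
      by linarith
  qed
  then have "Fbar A / (real b + 1) \<le> Lam E C \<gamma> p lam k A"
    by (simp add: Lam_def)
  then show ?thesis
    by (simp add: pos_divide_le_eq mult.commute)
qed

end

lemma ceiling_log2_nonneg: "0 \<le> \<lceil>log 2 (real n)\<rceil>"
proof (cases "n = 0")
  case False
  then have "0 \<le> log 2 (real n)"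
    by simp
  then show ?thesis
    by simp
qed (simp add: log_def)

lemma le_two_pow_ceiling_log2: "n \<le> 2 ^ nat \<lceil>log 2 (real n)\<rceil>"
proof (cases "n = 0")
  case False
  then have "real n = 2 powr log 2 (real n)"
    by simp
  also have "\<dots> \<le> 2 powr real (nat \<lceil>log 2 (real n)\<rceil>)"
    using ceiling_log2_nonneg[of n] by (intro powr_mono) linarith+
  also have "\<dots> = 2 ^ nat \<lceil>log 2 (real n)\<rceil>"
    by (simp add: powr_realpow)
  finally show ?thesis
    by (metis of_nat_le_iff of_nat_numeral of_nat_power)
qed simp

theorem theorem2:
  fixes V :: "'v set" and E :: "'v edge set" and C :: "'v edge \<Rightarrow> real"
    and s t :: 'v and \<gamma> :: real
    and k :: nat and p :: "nat \<Rightarrow> 'v edge set" and lam :: "nat \<Rightarrow> real"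
    and sp :: "'v \<Rightarrow> 'v \<Rightarrow> 'v edge set option" and vs :: "'v list"
    and Estar :: "'v edge set" and I :: nat
  assumes finV: "finite V"
    and EV: "E \<subseteq> V \<times> V"
    and noloop: "\<forall>v. (v, v) \<notin> E"
    and dag: "acyclic E"
    and Cnn: "\<forall>e \<in> E. 0 \<le> C e"
    and sV: "s \<in> V" and tV: "t \<in> V" and st: "s \<noteq> t"
    and conn: "\<exists>S. st_path E s t S"
    and gpos: "0 < \<gamma>" and gle: "\<forall>e \<in> E. \<gamma> \<le> C e"
    and upaths: "\<forall>i<k. is_dpath E (p i)"
    and lamnn: "\<forall>i<k. 0 \<le> lam i"
    and lamfeas: "\<forall>e \<in> E. load p lam k e \<le> C e"
    and sp: "valid_sp E sp"
    and vs: "distinct vs" "set vs = V"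
    and Estar_path: "st_path E s t Estar"
    and Estar_opt: "\<forall>S. st_path E s t S \<longrightarrow> Lam E C \<gamma> p lam k S \<le> Lam E C \<gamma> p lam k Estar"
    and depth: "int I \<ge> \<lceil>log 2 (real (card Estar))\<rceil>"
  shows "\<exists>Ef. RG (Lbar E C \<gamma> p lam k) sp vs I s t {} = Some Ef \<and> st_path E s t Ef \<and>
     Lam E C \<gamma> p lam k Ef \<ge>
       1 / ((real (Max {card (E2 E p k \<inter> p i) | i. i < k}) + 1) *
            (real_of_int \<lceil>log 2 (real (card Estar))\<rceil> + 1)) * Lam E C \<gamma> p lam k Estar"
proof -
  interpret network E C \<gamma> p lam k
    using finite_subset[OF EV] finV gpos gle lamnn by unfold_locales auto
  define L where "L = nat \<lceil>log 2 (real (card Estar))\<rceil>"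
  define b where "b = Max {card (E2 E p k \<inter> p i) | i. i < k}"
  have b: "\<forall>i<k. card (E2 E p k \<inter> p i) \<le> b"
    unfolding b_def by (auto intro!: Max_ge)
  have "Field E \<subseteq> set vs"
    using EV vs(2) by (auto simp: Field_def)
  moreover have "L \<le> I"
    using depth by (simp add: L_def nat_le_iff)
  ultimately obtain Ef where Ef: "RG Fbar sp vs I s t {} = Some Ef"
    "marginal Fbar {} Estar \<le> (real L + 1) * marginal Fbar {} Ef"
    using RG_approx[OF dag sp mono_Lbar submodular_Lbar _ Estar_path,
        where j = L and i = I and X = "{}"] le_two_pow_ceiling_log2
    unfolding L_def by blast
  have "Lam E C \<gamma> p lam k Estar \<le> Fbar Estar"
    by (rule Lam_le_Lbar)
  also have "\<dots> \<le> (real L + 1) * Fbar Ef"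
    using Ef(2) mult_nonneg_nonneg[OF of_nat_0_le_iff Lbar_empty_nonneg, of L]
    by (simp add: marginal_def algebra_simps)
  also have "\<dots> \<le> (real L + 1) * ((real b + 1) * Lam E C \<gamma> p lam k Ef)"
    using Lbar_le_Lam[OF b] by (intro mult_left_mono) auto
  finally have "Lam E C \<gamma> p lam k Estar / ((real b + 1) * (real L + 1)) \<le> Lam E C \<gamma> p lam k Ef"
    by (simp add: pos_divide_le_eq mult_ac)
  moreover have "real L = real_of_int \<lceil>log 2 (real (card Estar))\<rceil>"
    using ceiling_log2_nonneg by (simp add: L_def)
  ultimately show ?thesis
    using Ef(1) RG_st_path[OF dag sp Ef(1)] by (simp add: b_def)
qed

end
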